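(* Let $\mathcal H_A,\mathcal H_B$ be complex Hilbert spaces of finite dimensions $d_A,d_B$, let $\rho_{AB}$ be a positive definite density matrix on $\mathcal H_A\otimes\mathcal H_B$, let $\rho_A=\mathrm{tr}_B(\rho_{AB})$ be its partial trace over $B$, and let $\alpha>1$. Define \[ I_\alpha(A;B)_\rho=\inf_{\sigma_B} D_\alpha(\rho_{AB}\,\|\,\rho_A\otimes\sigma_B), \] where the infimum is over positive definite density matrices $\sigma_B$ on $\mathcal H_B$ and $D_\alpha(\rho\|\sigma)=\frac{1}{\alpha-1}\log\mathrm{tr}\,[\rho^\alpha\sigma^{1-\alpha}]$. Then \[ I_\alpha(A;B)_\rho\ \ge\ \frac{\alpha}{\alpha-1}\Big(\log(d_Ad_B)+\frac{1}{d_Ad_B}\log\det(\rho_{AB})\Big). \]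
   Context: A density matrix is a Hermitian positive semidefinite matrix with trace $1$. Real powers of positive definite matrices are defined by functional calculus. $\log$ denotes the logarithm to a fixed base greater than $1$. *)

theory Defs
  imports "Jordan_Normal_Form.Schur_Decomposition" "Jordan_Normal_Form.Determinant"
begin

(* Hilbert spaces C^n; operators are complex n x n matrices (carrier_mat n n). *)

definition mtrace :: "complex mat \<Rightarrow> complex" where
  "mtrace A = (\<Sum>i<dim_row A. A $$ (i, i))"

definition hermitian_mat :: "complex mat \<Rightarrow> bool" where
  "hermitian_mat A \<longleftrightarrow> A \<in> carrier_mat (dim_row A) (dim_row A) \<and> mat_adjoint A = A"

definition pos_def_mat :: "nat \<Rightarrow> complex mat \<Rightarrow> bool" where
  "pos_def_mat n A \<longleftrightarrow> A \<in> carrier_mat n n \<and> hermitian_mat A \<and>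
     (\<forall>v \<in> carrier_vec n. v \<noteq> 0\<^sub>v n \<longrightarrow> 0 < Re (conjugate v \<bullet> (A *\<^sub>v v)))"

definition pos_semidef_mat :: "nat \<Rightarrow> complex mat \<Rightarrow> bool" where
  "pos_semidef_mat n A \<longleftrightarrow> A \<in> carrier_mat n n \<and> hermitian_mat A \<and>
     (\<forall>v \<in> carrier_vec n. 0 \<le> Re (conjugate v \<bullet> (A *\<^sub>v v)))"

definition density_mat :: "nat \<Rightarrow> complex mat \<Rightarrow> bool" where
  "density_mat n A \<longleftrightarrow> pos_semidef_mat n A \<and> mtrace A = 1"

definition real_diag_mat :: "nat \<Rightarrow> (nat \<Rightarrow> real) \<Rightarrow> complex mat" where
  "real_diag_mat n l = mat n n (\<lambda>(i,j). if i = j then complex_of_real (l i) else 0)"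

definition unitary_mat :: "nat \<Rightarrow> complex mat \<Rightarrow> bool" where
  "unitary_mat n U \<longleftrightarrow> U \<in> carrier_mat n n \<and> U * mat_adjoint U = 1\<^sub>m n"

definition mat_powr :: "complex mat \<Rightarrow> real \<Rightarrow> complex mat" where
  "mat_powr A t = (let n = dim_row A in
     (SOME B. \<exists>U l. unitary_mat n U \<and> (\<forall>i<n. 0 < l i) \<and>
        A = U * real_diag_mat n l * mat_adjoint U \<and>
        B = U * real_diag_mat n (\<lambda>i. l i powr t) * mat_adjoint U))"

text \<open>Tensor (Kronecker) product; basis |i> (x) |k> of C^dA (x) C^dB is index i*dB + k.\<close>
definition kron_mat :: "complex mat \<Rightarrow> complex mat \<Rightarrow> complex mat" where
  "kron_mat A B = mat (dim_row A * dim_row B) (dim_col A * dim_col B)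
     (\<lambda>(i,j). A $$ (i div dim_row B, j div dim_col B) * B $$ (i mod dim_row B, j mod dim_col B))"

definition ptrace_B :: "nat \<Rightarrow> nat \<Rightarrow> complex mat \<Rightarrow> complex mat" where
  "ptrace_B dA dB R = mat dA dA (\<lambda>(i,j). \<Sum>k<dB. R $$ (i * dB + k, j * dB + k))"

definition renyi_div :: "real \<Rightarrow> real \<Rightarrow> complex mat \<Rightarrow> complex mat \<Rightarrow> real" where
  "renyi_div b \<alpha> \<rho> \<sigma> = 1 / (\<alpha> - 1) * log b (Re (mtrace (mat_powr \<rho> \<alpha> * mat_powr \<sigma> (1 - \<alpha>))))"

definition renyi_MI :: "real \<Rightarrow> real \<Rightarrow> nat \<Rightarrow> nat \<Rightarrow> complex mat \<Rightarrow> real" where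
  "renyi_MI b \<alpha> dA dB \<rho> = (INF \<sigma> \<in> {\<sigma>. pos_def_mat dB \<sigma> \<and> density_mat dB \<sigma>}.
      renyi_div b \<alpha> \<rho> (kron_mat (ptrace_B dA dB \<rho>) \<sigma>))"

end

theory Submission
  imports Defs "Jordan_Normal_Form.Spectral_Radius"
begin

text \<open>
  Diagonalise \<open>\<rho> = U diag(\<lambda>) U*\<close> and \<open>\<tau> = \<rho>_A \<otimes> \<sigma> = V diag(\<mu>) V*\<close>. Then
  \<open>tr(\<rho>^\<alpha> \<tau>^(1-\<alpha>)) = \<Sum>_ij \<lambda>_i^\<alpha> \<mu>_j^(1-\<alpha>) P_ij\<close> with \<open>P_ij = |(U* V)_ij|^2\<close>
  doubly stochastic. Concavity of \<open>ln\<close> with the weights \<open>P_ij / d\<close> bounds the logarithm of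
  this sum below by \<open>\<alpha>/d \<Sum> ln \<lambda>_i + (1-\<alpha>)/d \<Sum> ln \<mu>_j - ln d\<close>; since \<open>\<Sum> \<mu>_j = 1\<close>,
  concavity once more gives \<open>\<Sum> ln \<mu>_j \<le> -d ln d\<close>, and \<open>\<Sum> ln \<lambda>_i = ln det \<rho>\<close>.
  The bound so obtained holds for every full-rank state \<open>\<tau>\<close> of unit trace, hence for each
  \<open>\<sigma>\<close> and so for the infimum.
\<close>

section \<open>Adjoints, unitaries and sums\<close>

lemma mat_adjoint_dim [simp]:
  "dim_row (mat_adjoint A) = dim_col A" "dim_col (mat_adjoint A) = dim_row A"
  unfolding mat_adjoint_def by (auto simp: mat_of_rows_def)

lemma index_mat_adjoint [simp]:
  "i < dim_col A \<Longrightarrow> j < dim_row A \<Longrightarrow> mat_adjoint A $$ (i,j) = cnj (A $$ (j,i))"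
  unfolding mat_adjoint_def by (auto simp: mat_of_rows_def)

lemma mat_adjoint_carrier [simp]: "A \<in> carrier_mat n m \<Longrightarrow> mat_adjoint A \<in> carrier_mat m n"
  by (intro carrier_matI) auto

lemma mat_adjoint_adjoint [simp]: "mat_adjoint (mat_adjoint (A :: complex mat)) = A"
  by (rule eq_matI) auto

lemma index_mult_mat_sum:
  "i < dim_row A \<Longrightarrow> j < dim_col B \<Longrightarrow> dim_col A = dim_row B \<Longrightarrow>
   (A * B) $$ (i,j) = (\<Sum>k<dim_col A. A $$ (i,k) * B $$ (k,j))"
  by (simp add: scalar_prod_def lessThan_atLeast0)

lemma index_mult_mat_carrier:
  "A \<in> carrier_mat n k \<Longrightarrow> B \<in> carrier_mat k m \<Longrightarrow> i < n \<Longrightarrow> j < m \<Longrightarrow>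
   (A * B) $$ (i,j) = (\<Sum>c<k. A $$ (i,c) * B $$ (c,j))"
  by (subst index_mult_mat_sum) auto

lemma mat_adjoint_mult:
  "A \<in> carrier_mat n k \<Longrightarrow> B \<in> carrier_mat k m \<Longrightarrow>
   mat_adjoint (A * (B :: complex mat)) = mat_adjoint B * mat_adjoint A"
  by (rule eq_matI)
    (auto simp del: index_mult_mat simp add: index_mult_mat_sum mult.commute index_mult_mat(2,3)
      intro!: sum.cong)

lemma cscalar_prod_sum:
  "v \<in> carrier_vec n \<Longrightarrow> w \<in> carrier_vec n \<Longrightarrow> v \<bullet>c (w :: complex vec) = (\<Sum>i<n. v$i * cnj (w$i))"
  by (auto simp: scalar_prod_def lessThan_atLeast0)

lemma quadratic_form_sum:
  assumes "w \<in> carrier_vec N" and "A \<in> carrier_mat N N"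
  shows "conjugate w \<bullet> (A *\<^sub>v w) = (\<Sum>x<N. \<Sum>y<N. cnj (w$x) * A$$(x,y) * w$y)"
  using assms by (simp add: scalar_prod_def lessThan_atLeast0 sum_distrib_left mult.assoc)

lemma nonzero_vec_obtain_index:
  assumes "v \<in> carrier_vec n" and "v \<noteq> 0\<^sub>v n"
  obtains i where "i < n" and "v $ i \<noteq> 0"
  using assms by (metis carrier_vecD eq_vecI index_zero_vec(1,2))

lemma unitary_mat_carrier: "unitary_mat n U \<Longrightarrow> U \<in> carrier_mat n n"
  unfolding unitary_mat_def by simp

lemma unitary_mat_mult_adjoint: "unitary_mat n U \<Longrightarrow> U * mat_adjoint U = 1\<^sub>m n"
  unfolding unitary_mat_def by simp

lemma unitary_mat_adjoint_mult: "unitary_mat n U \<Longrightarrow> mat_adjoint U * U = 1\<^sub>m n"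
  unfolding unitary_mat_def using mat_mult_left_right_inverse[of U n "mat_adjoint U"] by auto

lemma unitary_mat_adjoint: "unitary_mat n U \<Longrightarrow> unitary_mat n (mat_adjoint U)"
  using unitary_mat_adjoint_mult[of n U] unfolding unitary_mat_def by simp

lemma unitary_matI_adjoint_mult:
  "U \<in> carrier_mat n n \<Longrightarrow> mat_adjoint U * U = 1\<^sub>m n \<Longrightarrow> unitary_mat n U"
  unfolding unitary_mat_def using mat_mult_left_right_inverse[of "mat_adjoint U" n U] by auto

lemma unitary_mat_mult:
  assumes U: "unitary_mat n U" and V: "unitary_mat n V"
  shows "unitary_mat n (U * V)"
proof -
  have Uc: "U \<in> carrier_mat n n" and Vc: "V \<in> carrier_mat n n"
    using U V by (auto dest: unitary_mat_carrier)
  have "U * V * mat_adjoint (U * V) = U * (V * mat_adjoint V) * mat_adjoint U"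
    using Uc Vc by (simp add: mat_adjoint_mult[OF Uc Vc] assoc_mult_mat[of _ n n _ n _ n]
        mult_carrier_mat[of _ n n _ n])
  also have "\<dots> = 1\<^sub>m n"
    using Uc unitary_mat_mult_adjoint[OF U] unitary_mat_mult_adjoint[OF V] by simp
  finally show ?thesis using Uc Vc unfolding unitary_mat_def by auto
qed

lemma unitary_mat_row_norms:
  assumes "unitary_mat n C" and i: "i < n"
  shows "(\<Sum>j<n. (cmod (C $$ (i,j)))^2) = 1"
proof -
  have C: "C \<in> carrier_mat n n" using assms(1) by (rule unitary_mat_carrier)
  have "complex_of_real (\<Sum>j<n. (cmod (C $$ (i,j)))^2) = (\<Sum>j<n. C $$ (i,j) * cnj (C $$ (i,j)))"
    unfolding of_real_sum by (intro sum.cong refl) (metis complex_norm_square)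
  also have "\<dots> = (C * mat_adjoint C) $$ (i,i)"
    using C i by (simp add: index_mult_mat_sum index_mult_mat(2,3) del: index_mult_mat)
  also have "\<dots> = 1" using unitary_mat_mult_adjoint[OF assms(1)] i by simp
  finally show ?thesis by (metis of_real_eq_1_iff)
qed

lemma unitary_mat_col_norms:
  assumes "unitary_mat n C" and "j < n"
  shows "(\<Sum>i<n. (cmod (C $$ (i,j)))^2) = 1"
proof -
  have C: "C \<in> carrier_mat n n" using assms(1) by (rule unitary_mat_carrier)
  have "(\<Sum>i<n. (cmod (C $$ (i,j)))^2) = (\<Sum>i<n. (cmod (mat_adjoint C $$ (j,i)))^2)"
    using C assms(2) by (intro sum.cong) auto
  also have "\<dots> = 1" by (rule unitary_mat_row_norms[OF unitary_mat_adjoint[OF assms(1)] assms(2)])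
  finally show ?thesis .
qed

section \<open>Spectral theorem for Hermitian matrices\<close>

lemma unitary_mat_normalized_cols:
  fixes ws :: "complex vec list"
  assumes ws: "set ws \<subseteq> carrier_vec n" "corthogonal ws" "length ws = n"
  shows "unitary_mat n (mat n n (\<lambda>(i,j). ws!j $ i / complex_of_real (sqrt (\<Sum>k<n. (cmod (ws!j $ k))^2))))"
    (is "unitary_mat n ?W")
proof -
  define nr where "nr j = sqrt (\<Sum>k<n. (cmod (ws!j $ k))^2)" for j
  have wsc: "ws ! j \<in> carrier_vec n" if "j < n" for j using ws that by auto
  have nrsq: "complex_of_real (nr j) * complex_of_real (nr j) = (\<Sum>k<n. cnj (ws!j $ k) * ws!j $ k)" for j
  proof -
    have "complex_of_real (nr j) * complex_of_real (nr j) = complex_of_real (\<Sum>k<n. (cmod (ws!j $ k))^2)"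
      unfolding nr_def of_real_mult[symmetric] by (subst real_sqrt_mult_self) (simp add: sum_nonneg)
    also have "\<dots> = (\<Sum>k<n. cnj (ws!j $ k) * ws!j $ k)"
      unfolding of_real_sum by (intro sum.cong refl) (metis complex_norm_square mult.commute)
    finally show ?thesis .
  qed
  have nr0: "nr j \<noteq> 0" if j: "j < n" for j
  proof
    assume "nr j = 0"
    hence "(\<Sum>k<n. cnj (ws!j $ k) * ws!j $ k) = 0" using nrsq[of j] by simp
    moreover have "ws!j \<bullet>c ws!j \<noteq> 0" using corthogonalD[OF ws(2)] j ws(3) by auto
    ultimately show False
      using cscalar_prod_sum[OF wsc[OF j] wsc[OF j]] by (simp add: mult.commute)
  qed
  have "mat_adjoint ?W * ?W = 1\<^sub>m n"
  proof (rule eq_matI)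
    fix i j assume "i < dim_row (1\<^sub>m n)" "j < dim_col (1\<^sub>m n)"
    hence i: "i < n" and j: "j < n" by auto
    have "(mat_adjoint ?W * ?W) $$ (i,j) =
        (\<Sum>k<n. cnj (ws!i $ k) * ws!j $ k) / (complex_of_real (nr i) * complex_of_real (nr j))"
      using i j by (simp add: index_mult_mat_sum nr_def sum_divide_distrib index_mult_mat(2,3)
          del: index_mult_mat)
    also have "\<dots> = 1\<^sub>m n $$ (i,j)"
    proof (cases "i = j")
      case True thus ?thesis using nrsq[of i, symmetric] nr0[OF i] i by simp
    next
      case False
      have "ws!j \<bullet>c ws!i = 0" using corthogonalD[OF ws(2)] i j ws(3) False by auto
      hence "(\<Sum>k<n. cnj (ws!i $ k) * ws!j $ k) = 0"
        using cscalar_prod_sum[OF wsc[OF j] wsc[OF i]] by (simp add: mult.commute)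
      thus ?thesis using False i j by simp
    qed
    finally show "(mat_adjoint ?W * ?W) $$ (i,j) = 1\<^sub>m n $$ (i,j)" .
  qed auto
  thus ?thesis by (intro unitary_matI_adjoint_mult) auto
qed

lemma unitary_mat_first_col:
  fixes v :: "complex vec"
  assumes v: "v \<in> carrier_vec n" and v0: "v \<noteq> 0\<^sub>v n"
  shows "\<exists>W c. unitary_mat n W \<and> (\<forall>k<n. W $$ (k,0) = c * v $ k)"
proof -
  interpret cof_vec_space n "TYPE(complex)" .
  define b where "b = basis_completion v"
  from basis_completion[OF v v0, folded b_def]
  have dist_b: "distinct b" and indep: "\<not> lin_dep (set b)" and b: "set b \<subseteq> carrier_vec n"
    and hdb: "hd b = v" and len_b: "length b = n" by auto
  have n0: "0 < n" using v v0 by (cases n) auto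
  with hdb len_b obtain vs where bv: "b = v # vs" by (cases b) auto
  define ws where "ws = gram_schmidt n b"
  from gram_schmidt_result[OF b dist_b indep refl, folded ws_def]
  have ws: "set ws \<subseteq> carrier_vec n" "corthogonal ws" "length ws = n" by (auto simp: len_b)
  from gram_schmidt_hd[OF v, of vs, folded bv] have "hd ws = v" unfolding ws_def .
  hence ws0: "ws ! 0 = v" using ws(3) n0 by (cases ws) auto
  define c where "c = 1 / complex_of_real (sqrt (\<Sum>k<n. (cmod (ws!0 $ k))^2))"
  show ?thesis
    using unitary_mat_normalized_cols[OF ws] n0 by (intro exI[of _ c] exI) (auto simp: c_def ws0)
qed

lemma hermitian_deflation:
  fixes A :: "complex mat"
  assumes A: "A \<in> carrier_mat (Suc m) (Suc m)" and hA: "mat_adjoint A = A"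
  shows "\<exists>W a A3. unitary_mat (Suc m) W \<and> A3 \<in> carrier_mat m m \<and> mat_adjoint A3 = A3 \<and>
    mat_adjoint W * A * W = four_block_mat (mat 1 1 (\<lambda>_. a)) (0\<^sub>m 1 m) (0\<^sub>m m 1) A3"
proof -
  define n where "n = Suc m"
  have A: "A \<in> carrier_mat n n" using A n_def by simp
  obtain e where "e \<in> spectrum A" using spectrum_non_empty[OF A] n_def by auto
  then obtain v where "eigenvector A v e" unfolding spectrum_def eigenvalue_def by auto
  hence v: "v \<in> carrier_vec n" and v0: "v \<noteq> 0\<^sub>v n" and Av: "A *\<^sub>v v = e \<cdot>\<^sub>v v"
    using A unfolding eigenvector_def by auto
  obtain W c where W: "unitary_mat n W" and W0: "\<forall>k<n. W $$ (k,0) = c * v $ k"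
    using unitary_mat_first_col[OF v v0] by blast
  have Wc: "W \<in> carrier_mat n n" using W by (rule unitary_mat_carrier)
  have n0: "0 < n" using n_def by simp
  have AW0: "(A * W) $$ (k,0) = e * W $$ (k,0)" if k: "k < n" for k
  proof -
    have "(A * W) $$ (k,0) = c * (\<Sum>l<n. A $$ (k,l) * v $ l)"
      using k A Wc W0 n0
      by (simp add: index_mult_mat_sum sum_distrib_left mult.left_commute index_mult_mat(2,3)
          del: index_mult_mat)
    also have "(\<Sum>l<n. A $$ (k,l) * v $ l) = (A *\<^sub>v v) $ k"
      using k A v by (simp add: scalar_prod_def lessThan_atLeast0)
    finally show ?thesis using Av k v W0 by simp
  qed
  define A' where "A' = mat_adjoint W * A * W"
  have A': "A' \<in> carrier_mat n n" unfolding A'_def using Wc A by auto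
  have hA': "mat_adjoint A' = A'"
    unfolding A'_def using Wc A hA
    by (simp add: mat_adjoint_mult[of _ n n _ n] assoc_mult_mat[of _ n n _ n _ n]
        mult_carrier_mat[of _ n n _ n])
  have A'col: "A' $$ (i,0) = 0" if "i < n" "i \<noteq> 0" for i
  proof -
    have "A' $$ (i,0) = (mat_adjoint W * (A * W)) $$ (i,0)"
      unfolding A'_def using Wc A by (simp add: assoc_mult_mat[of _ n n _ n _ n])
    also have "\<dots> = (\<Sum>k<n. mat_adjoint W $$ (i,k) * (e * W $$ (k,0)))"
      using that Wc A n0
      by (subst index_mult_mat_sum) (auto simp del: index_mult_mat simp: AW0 index_mult_mat(2,3)
          intro!: sum.cong)
    also have "\<dots> = e * (mat_adjoint W * W) $$ (i,0)"
      using that Wc n0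
      by (simp add: index_mult_mat_sum sum_distrib_left mult.left_commute index_mult_mat(2,3)
          del: index_mult_mat)
    also have "\<dots> = 0" using unitary_mat_adjoint_mult[OF W] that n_def by simp
    finally show ?thesis .
  qed
  have A'row: "A' $$ (0,j) = 0" if "j < n" "j \<noteq> 0" for j
    using arg_cong[OF hA', of "\<lambda>M. M $$ (0,j)"] A' that n_def A'col by simp
  define A3 where "A3 = mat m m (\<lambda>(i,j). A' $$ (Suc i, Suc j))"
  have A3: "A3 \<in> carrier_mat m m" unfolding A3_def by auto
  have "mat_adjoint A3 = A3"
  proof (rule eq_matI)
    fix i j assume "i < dim_row A3" "j < dim_col A3"
    hence ij: "i < m" "j < m" using A3 by auto
    have "mat_adjoint A3 $$ (i,j) = mat_adjoint A' $$ (Suc i, Suc j)"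
      using ij A3 A' n_def by (simp add: A3_def)
    thus "mat_adjoint A3 $$ (i,j) = A3 $$ (i,j)" using hA' ij by (simp add: A3_def)
  qed (use A3 in auto)
  moreover have "A' = four_block_mat (mat 1 1 (\<lambda>_. A' $$ (0,0))) (0\<^sub>m 1 m) (0\<^sub>m m 1) A3"
  proof (rule eq_matI)
    fix i j assume "i < dim_row (four_block_mat (mat 1 1 (\<lambda>_. A' $$ (0,0))) (0\<^sub>m 1 m) (0\<^sub>m m 1) A3)"
      "j < dim_col (four_block_mat (mat 1 1 (\<lambda>_. A' $$ (0,0))) (0\<^sub>m 1 m) (0\<^sub>m m 1) A3)"
    hence ij: "i < n" "j < n" using A3 n_def by auto
    thus "A' $$ (i,j) = four_block_mat (mat 1 1 (\<lambda>_. A' $$ (0,0))) (0\<^sub>m 1 m) (0\<^sub>m m 1) A3 $$ (i,j)"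
      using A3 A'row[OF ij(2)] A'col[OF ij(1)] n_def by (cases i; cases j) (auto simp: A3_def)
  qed (use A3 A' n_def in auto)
  ultimately show ?thesis using W A3 unfolding n_def A'_def by blast
qed

lemma unitary_mat_block_diag:
  assumes U: "unitary_mat m U"
  shows "unitary_mat (Suc m) (four_block_mat (1\<^sub>m 1) (0\<^sub>m 1 m) (0\<^sub>m m 1) U)"
    (is "unitary_mat _ ?F")
proof -
  have Uc: "U \<in> carrier_mat m m" using U by (rule unitary_mat_carrier)
  have "mat_adjoint ?F = four_block_mat (1\<^sub>m 1) (0\<^sub>m 1 m) (0\<^sub>m m 1) (mat_adjoint U)"
    by (rule eq_matI) (use Uc in auto)
  hence "?F * mat_adjoint ?F = 1\<^sub>m (Suc m)"
    using Uc unitary_mat_mult_adjoint[OF U]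
    by (simp add: mult_four_block_mat[of _ 1 1 _ m _ m _ _ 1 _ m])
  thus ?thesis unfolding unitary_mat_def using Uc by auto
qed

lemma hermitian_unitary_diagonalization:
  fixes A :: "complex mat"
  assumes "A \<in> carrier_mat n n" and "mat_adjoint A = A"
  shows "\<exists>U. unitary_mat n U \<and> diagonal_mat (mat_adjoint U * A * U)"
  using assms
proof (induction n arbitrary: A)
  case 0
  then show ?case by (intro exI[of _ "1\<^sub>m 0"]) (auto simp: diagonal_mat_def unitary_mat_def)
next
  case (Suc m A)
  obtain W a A3 where W: "unitary_mat (Suc m) W" and A3: "A3 \<in> carrier_mat m m"
    and hA3: "mat_adjoint A3 = A3"
    and WAW: "mat_adjoint W * A * W = four_block_mat (mat 1 1 (\<lambda>_. a)) (0\<^sub>m 1 m) (0\<^sub>m m 1) A3"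
    using hermitian_deflation[OF Suc.prems] by blast
  obtain U3 where U3: "unitary_mat m U3" and U3d: "diagonal_mat (mat_adjoint U3 * A3 * U3)"
    using Suc.IH[OF A3 hA3] by blast
  define F where "F = four_block_mat (1\<^sub>m 1) (0\<^sub>m 1 m) (0\<^sub>m m 1) U3"
  have F: "unitary_mat (Suc m) F" unfolding F_def by (rule unitary_mat_block_diag[OF U3])
  have Wc: "W \<in> carrier_mat (Suc m) (Suc m)" and Fc: "F \<in> carrier_mat (Suc m) (Suc m)"
    and U3c: "U3 \<in> carrier_mat m m"
    using W F U3 by (auto dest: unitary_mat_carrier)
  have adjF: "mat_adjoint F = four_block_mat (1\<^sub>m 1) (0\<^sub>m 1 m) (0\<^sub>m m 1) (mat_adjoint U3)"
    by (rule eq_matI) (use U3c in \<open>auto simp: F_def\<close>)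
  have "mat_adjoint (W * F) * A * (W * F) = mat_adjoint F * (mat_adjoint W * A * W) * F"
    using Wc Fc Suc.prems(1)
    by (simp add: mat_adjoint_mult[OF Wc Fc] assoc_mult_mat[of _ "Suc m" "Suc m" _ "Suc m" _ "Suc m"]
        mult_carrier_mat[of _ "Suc m" "Suc m" _ "Suc m"])
  also have "\<dots> = four_block_mat (mat 1 1 (\<lambda>_. a)) (0\<^sub>m 1 m) (0\<^sub>m m 1) (mat_adjoint U3 * A3) * F"
    unfolding WAW adjF using U3c A3 mult_carrier_mat[OF mat_adjoint_carrier[OF U3c] A3]
    by (subst mult_four_block_mat[of _ 1 1 _ m _ m _ _ 1 _ m]) auto
  also have "\<dots> = four_block_mat (mat 1 1 (\<lambda>_. a)) (0\<^sub>m 1 m) (0\<^sub>m m 1) (mat_adjoint U3 * A3 * U3)"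
    unfolding F_def using U3c A3
    by (subst mult_four_block_mat[of _ 1 1 _ m _ m _ _ 1 _ m]) auto
  finally have "diagonal_mat (mat_adjoint (W * F) * A * (W * F))"
    using U3d U3c A3 by (auto simp: diagonal_mat_def)
  with unitary_mat_mult[OF W F] show ?case by blast
qed

section \<open>Positive definite matrices and their eigendecompositions\<close>

definition pos_eigen_decomp :: "nat \<Rightarrow> complex mat \<Rightarrow> complex mat \<Rightarrow> (nat \<Rightarrow> real) \<Rightarrow> bool" where
  "pos_eigen_decomp n A U l \<longleftrightarrow>
     unitary_mat n U \<and> (\<forall>i<n. 0 < l i) \<and> A = U * real_diag_mat n l * mat_adjoint U"

lemma real_diag_mat_carrier [simp]: "real_diag_mat n l \<in> carrier_mat n n"
  unfolding real_diag_mat_def by auto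

lemma real_diag_mat_dim [simp]: "dim_row (real_diag_mat n l) = n" "dim_col (real_diag_mat n l) = n"
  unfolding real_diag_mat_def by auto

lemma hermitian_diagonal_eq_real_diag_mat:
  assumes D: "D \<in> carrier_mat n n" and "mat_adjoint D = D" and "diagonal_mat D"
  shows "D = real_diag_mat n (\<lambda>i. Re (D $$ (i,i)))"
proof (rule eq_matI)
  fix i j assume "i < dim_row (real_diag_mat n (\<lambda>i. Re (D $$ (i,i))))"
    "j < dim_col (real_diag_mat n (\<lambda>i. Re (D $$ (i,i))))"
  hence i: "i < n" and j: "j < n" by auto
  have "cnj (D $$ (i,i)) = D $$ (i,i)" using arg_cong[OF assms(2), of "\<lambda>M. M $$ (i,i)"] D i by simp
  hence "D $$ (i,i) = complex_of_real (Re (D $$ (i,i)))" by (simp add: complex_eq_iff)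
  thus "D $$ (i,j) = real_diag_mat n (\<lambda>i. Re (D $$ (i,i))) $$ (i,j)"
    using assms(3) D i j unfolding diagonal_mat_def by (auto simp: real_diag_mat_def)
qed (use D in auto)

lemma pos_def_mat_unitary_conj_diag_pos:
  assumes A: "pos_def_mat n A" and U: "unitary_mat n U" and i: "i < n"
  shows "0 < Re ((mat_adjoint U * A * U) $$ (i,i))"
proof -
  have Ac: "A \<in> carrier_mat n n" using A unfolding pos_def_mat_def by auto
  have Uc: "U \<in> carrier_mat n n" using U by (rule unitary_mat_carrier)
  have c: "col U i \<in> carrier_vec n" using Uc by auto
  have "(mat_adjoint U * A * U) $$ (i,i) = (mat_adjoint U * (A * U)) $$ (i,i)"
    using Uc Ac by (simp add: assoc_mult_mat[of _ n n _ n _ n])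
  also have "\<dots> = (\<Sum>k<n. cnj (U $$ (k,i)) * (A * U) $$ (k,i))"
    using Uc Ac i
    by (subst index_mult_mat_carrier[of _ n n _ n]) (auto simp del: index_mult_mat intro!: sum.cong)
  also have "\<dots> = conjugate (col U i) \<bullet> (A *\<^sub>v col U i)"
    using Uc Ac i by (auto simp: scalar_prod_def lessThan_atLeast0 intro!: sum.cong)
  finally have eq: "(mat_adjoint U * A * U) $$ (i,i) = conjugate (col U i) \<bullet> (A *\<^sub>v col U i)" .
  have "(\<Sum>k<n. (cmod (col U i $ k))^2) = 1"
    using unitary_mat_col_norms[OF U i] Uc i by simp
  hence "col U i \<noteq> 0\<^sub>v n" by auto
  thus ?thesis using A c unfolding eq pos_def_mat_def by auto
qed

lemma pos_def_mat_eigen_decomp: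
  assumes A: "pos_def_mat n A"
  shows "\<exists>U l. pos_eigen_decomp n A U l"
proof -
  have Ac: "A \<in> carrier_mat n n" and hA: "mat_adjoint A = A"
    using A unfolding pos_def_mat_def hermitian_mat_def by auto
  obtain U where U: "unitary_mat n U" and dg: "diagonal_mat (mat_adjoint U * A * U)"
    using hermitian_unitary_diagonalization[OF Ac hA] by blast
  have Uc: "U \<in> carrier_mat n n" using U by (rule unitary_mat_carrier)
  define D where "D = mat_adjoint U * A * U"
  define l where "l i = Re (D $$ (i,i))" for i
  have D: "D \<in> carrier_mat n n" unfolding D_def using Uc Ac by auto
  have "mat_adjoint D = D" unfolding D_def using Uc Ac hA
    by (simp add: mat_adjoint_mult[of _ n n _ n] assoc_mult_mat[of _ n n _ n _ n]
        mult_carrier_mat[of _ n n _ n])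
  hence Dl: "D = real_diag_mat n l"
    unfolding l_def using hermitian_diagonal_eq_real_diag_mat[OF D _ dg[folded D_def]] by blast
  have "U * D * mat_adjoint U = (U * mat_adjoint U) * A * (U * mat_adjoint U)"
    unfolding D_def using Uc Ac
    by (simp add: assoc_mult_mat[of _ n n _ n _ n] mult_carrier_mat[of _ n n _ n])
  also have "\<dots> = A" using unitary_mat_mult_adjoint[OF U] Ac by simp
  finally have "A = U * real_diag_mat n l * mat_adjoint U" unfolding Dl by simp
  moreover have "\<forall>i<n. 0 < l i"
    using pos_def_mat_unitary_conj_diag_pos[OF A U] unfolding l_def D_def by blast
  ultimately show ?thesis using U unfolding pos_eigen_decomp_def by blast
qed

text \<open>\<open>mat_powr\<close> chooses its eigendecomposition by \<open>SOME\<close>, so we only learn that it uses one.\<close>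

lemma mat_powr_eigen_decomp:
  assumes "dim_row A = n" and "pos_eigen_decomp n A U l"
  shows "\<exists>V m. pos_eigen_decomp n A V m \<and>
    mat_powr A t = V * real_diag_mat n (\<lambda>i. m i powr t) * mat_adjoint V"
proof -
  let ?P = "\<lambda>B. \<exists>V m. pos_eigen_decomp n A V m \<and>
    B = V * real_diag_mat n (\<lambda>i. m i powr t) * mat_adjoint V"
  have "mat_powr A t = (SOME B. ?P B)"
    unfolding mat_powr_def Let_def assms(1) pos_eigen_decomp_def by (simp add: conj_assoc)
  with someI_ex[of ?P] assms(2) show ?thesis by auto
qed

lemma index_eigen_mat:
  assumes "U \<in> carrier_mat n n" and "a < n" and "b < n"
  shows "(U * real_diag_mat n l * mat_adjoint U) $$ (a,b) =
    (\<Sum>i<n. U$$(a,i) * complex_of_real (l i) * cnj (U$$(b,i)))"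
proof -
  have "(U * real_diag_mat n l * mat_adjoint U) $$ (a,b) =
      (\<Sum>k<n. (\<Sum>i<n. U$$(a,i) * real_diag_mat n l $$ (i,k)) * cnj (U$$(b,k)))"
    using assms
    by (auto simp del: index_mult_mat simp: index_mult_mat_sum index_mult_mat(2,3) intro!: sum.cong)
  also have "\<dots> = (\<Sum>k<n. U$$(a,k) * complex_of_real (l k) * cnj (U$$(b,k)))"
    by (intro sum.cong refl) (simp add: real_diag_mat_def if_distrib cong: if_cong)
  finally show ?thesis .
qed

lemma mtrace_mult_sum:
  assumes "X \<in> carrier_mat n n" and "Y \<in> carrier_mat n n"
  shows "mtrace (X * Y) = (\<Sum>a<n. \<Sum>b<n. X $$ (a,b) * Y $$ (b,a))"
  unfolding mtrace_def using assms index_mult_mat_carrier[OF assms]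
  by (auto simp del: index_mult_mat simp add: index_mult_mat(2) intro!: sum.cong)

lemma mtrace_eigen_product:
  assumes U: "U \<in> carrier_mat n n" and V: "V \<in> carrier_mat n n"
  shows "mtrace ((U * real_diag_mat n l * mat_adjoint U) * (V * real_diag_mat n m * mat_adjoint V)) =
    complex_of_real (\<Sum>i<n. \<Sum>j<n. l i * m j * (cmod ((mat_adjoint U * V) $$ (i,j)))^2)"
proof -
  define f where "f a b i j = U$$(a,i) * complex_of_real (l i) * cnj (U$$(b,i)) *
      (V$$(b,j) * complex_of_real (m j) * cnj (V$$(a,j)))" for a b i j
  have "mtrace ((U * real_diag_mat n l * mat_adjoint U) * (V * real_diag_mat n m * mat_adjoint V)) =
      (\<Sum>a<n. \<Sum>b<n. (U * real_diag_mat n l * mat_adjoint U) $$ (a,b) *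
        (V * real_diag_mat n m * mat_adjoint V) $$ (b,a))"
    using U V by (intro mtrace_mult_sum) auto
  also have "\<dots> = (\<Sum>a<n. \<Sum>b<n. \<Sum>i<n. \<Sum>j<n. f a b i j)"
    by (intro sum.cong refl) (simp add: index_eigen_mat[OF U] index_eigen_mat[OF V] f_def sum_product)
  also have "\<dots> = (\<Sum>i<n. \<Sum>j<n. \<Sum>a<n. \<Sum>b<n. f a b i j)"
    by (subst sum.swap, subst (2) sum.swap, subst (3) sum.swap, subst (2) sum.swap) simp
  also have "\<dots> = (\<Sum>i<n. \<Sum>j<n. complex_of_real (l i * m j * (cmod ((mat_adjoint U * V) $$ (i,j)))^2))"
  proof (intro sum.cong refl)
    fix i j assume "i \<in> {..<n}" "j \<in> {..<n}"
    define c where "c = (mat_adjoint U * V) $$ (i,j)"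
    have c: "c = (\<Sum>b<n. cnj (U$$(b,i)) * V$$(b,j))"
      unfolding c_def using U V \<open>i \<in> {..<n}\<close> \<open>j \<in> {..<n}\<close>
      by (simp add: index_mult_mat_sum index_mult_mat(2,3) del: index_mult_mat)
    have "(\<Sum>a<n. \<Sum>b<n. f a b i j) = (\<Sum>a<n. \<Sum>b<n. complex_of_real (l i * m j) *
        ((U$$(a,i) * cnj (V$$(a,j))) * (cnj (U$$(b,i)) * V$$(b,j))))"
      by (intro sum.cong refl) (simp add: f_def algebra_simps)
    also have "\<dots> = complex_of_real (l i * m j) *
        ((\<Sum>a<n. U$$(a,i) * cnj (V$$(a,j))) * (\<Sum>b<n. cnj (U$$(b,i)) * V$$(b,j)))"
      unfolding sum_product by (simp add: sum_distrib_left)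
    also have "\<dots> = complex_of_real (l i * m j) * (cnj c * c)" unfolding c by (simp add: cnj_sum)
    also have "cnj c * c = complex_of_real ((cmod c)^2)" by (metis complex_norm_square mult.commute)
    finally show "(\<Sum>a<n. \<Sum>b<n. f a b i j) =
        complex_of_real (l i * m j * (cmod ((mat_adjoint U * V) $$ (i,j)))^2)"
      unfolding c_def by simp
  qed
  finally show ?thesis by (simp add: of_real_sum)
qed

lemma mtrace_eigen:
  assumes U: "unitary_mat n U"
  shows "mtrace (U * real_diag_mat n l * mat_adjoint U) = complex_of_real (\<Sum>i<n. l i)"
proof -
  have Uc: "U \<in> carrier_mat n n" using U by (rule unitary_mat_carrier)
  have "mtrace (U * real_diag_mat n l * mat_adjoint U) =
      (\<Sum>a<n. \<Sum>i<n. U$$(a,i) * complex_of_real (l i) * cnj (U$$(a,i)))"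
    unfolding mtrace_def using Uc
    by (simp del: index_mult_mat add: index_mult_mat(2) index_eigen_mat[OF Uc])
  also have "\<dots> = (\<Sum>i<n. \<Sum>a<n. complex_of_real (l i) * complex_of_real ((cmod (U$$(a,i)))^2))"
    by (subst sum.swap)
      (intro sum.cong refl, metis (no_types, lifting) complex_norm_square mult.assoc mult.commute)
  also have "\<dots> = (\<Sum>i<n. complex_of_real (l i) * complex_of_real (\<Sum>a<n. (cmod (U$$(a,i)))^2))"
    by (simp add: sum_distrib_left of_real_sum)
  also have "\<dots> = (\<Sum>i<n. complex_of_real (l i))"
    using unitary_mat_col_norms[OF U] by simp
  finally show ?thesis by (simp add: of_real_sum)
qed

lemma det_real_diag_mat: "det (real_diag_mat n l) = complex_of_real (\<Prod>i<n. l i)"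
proof -
  have "upper_triangular (real_diag_mat n l)"
    unfolding upper_triangular_def by (auto simp: real_diag_mat_def)
  hence "det (real_diag_mat n l) = prod_list (diag_mat (real_diag_mat n l))"
    by (rule det_upper_triangular[of _ n]) simp
  also have "\<dots> = (\<Prod>i<n. complex_of_real (l i))"
    unfolding diag_mat_def
    by (simp add: prod.distinct_set_conv_list[symmetric] atLeast0LessThan real_diag_mat_def)
  finally show ?thesis by simp
qed

lemma det_eigen:
  assumes U: "unitary_mat n U"
  shows "det (U * real_diag_mat n l * mat_adjoint U) = complex_of_real (\<Prod>i<n. l i)"
proof -
  have Uc: "U \<in> carrier_mat n n" using U by (rule unitary_mat_carrier)
  have "det (U * real_diag_mat n l * mat_adjoint U) =
      det (real_diag_mat n l) * (det U * det (mat_adjoint U))"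
    using Uc by (simp add: det_mult[of _ n] algebra_simps)
  also have "det U * det (mat_adjoint U) = 1"
    using det_mult[of U n "mat_adjoint U"] Uc unitary_mat_mult_adjoint[OF U] by simp
  finally show ?thesis by (simp add: det_real_diag_mat)
qed

lemma pos_def_real_diag_mat:
  assumes l: "\<forall>i<n. 0 < l i"
  shows "pos_def_mat n (real_diag_mat n l)"
proof -
  have "0 < Re (conjugate v \<bullet> (real_diag_mat n l *\<^sub>v v))"
    if v: "v \<in> carrier_vec n" and v0: "v \<noteq> 0\<^sub>v n" for v
  proof -
    have "conjugate v \<bullet> (real_diag_mat n l *\<^sub>v v) = (\<Sum>x<n. complex_of_real (l x * (cmod (v$x))^2))"
      unfolding quadratic_form_sum[OF v real_diag_mat_carrier]
    proof (intro sum.cong refl)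
      fix x assume x: "x \<in> {..<n}"
      have "(\<Sum>y<n. cnj (v$x) * real_diag_mat n l $$(x,y) * v$y) = cnj (v$x) * complex_of_real (l x) * v$x"
        using x by (simp add: real_diag_mat_def if_distrib if_distribR cong: if_cong)
      also have "\<dots> = complex_of_real (l x * (cmod (v$x))^2)"
        by (simp only: of_real_mult complex_norm_square) (simp add: algebra_simps)
      finally show "(\<Sum>y<n. cnj (v$x) * real_diag_mat n l $$(x,y) * v$y) =
          complex_of_real (l x * (cmod (v$x))^2)" .
    qed
    moreover obtain i where "i < n" "v $ i \<noteq> 0" using nonzero_vec_obtain_index[OF v v0] .
    hence "0 < (\<Sum>x<n. l x * (cmod (v$x))^2)"
      using l by (intro sum_pos2[of _ i]) (auto simp: less_imp_le)
    ultimately show ?thesis by (simp add: Re_sum)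
  qed
  moreover have "mat_adjoint (real_diag_mat n l) = real_diag_mat n l"
    by (rule eq_matI) (auto simp: real_diag_mat_def)
  ultimately show ?thesis unfolding pos_def_mat_def hermitian_mat_def by auto
qed

lemma pos_def_imp_pos_semidef_mat: "pos_def_mat n A \<Longrightarrow> pos_semidef_mat n A"
  unfolding pos_def_mat_def pos_semidef_mat_def
  by (metis conjugate_zero_vec less_eq_real_def order_refl scalar_prod_left_zero zero_complex.sel(1)
      mult_mat_vec_carrier)

section \<open>Tensor products and partial traces\<close>

lemma sum_lessThan_mult_nat:
  fixes a b :: nat shows "(\<Sum>x<a*b. f x) = (\<Sum>i<a. \<Sum>k<b. f (i*b+k))"
proof -
  have "(\<Sum>x<a*b. f x) = (\<Sum>i<a. sum f {i*b..<i*b+b})" by (rule sum.nat_group[symmetric])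
  also have "\<dots> = (\<Sum>i<a. \<Sum>k<b. f (i*b+k))"
  proof (rule sum.cong[OF refl])
    fix i
    have "sum f {0 + i*b..<b + i*b} = (\<Sum>k = 0..<b. f (k + i*b))" by (rule sum.shift_bounds_nat_ivl)
    thus "sum f {i*b..<i*b+b} = (\<Sum>k<b. f (i*b+k))" by (simp add: add.commute atLeast0LessThan[symmetric])
  qed
  finally show ?thesis .
qed

lemma div_mod_less_mult: "i < a * (b::nat) \<Longrightarrow> i div b < a \<and> i mod b < b"
  by (metis less_mult_imp_div_less mod_less_divisor mult_zero_right not_gr_zero not_less_zero)

lemma mult_add_less_mult:
  fixes p q a b :: nat
  assumes "p < a" and "q < b"
  shows "p*b+q < a*b"
proof -
  have "p*b+q < Suc p * b" using assms(2) by simp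
  also have "\<dots> \<le> a * b" using assms(1) by (intro mult_le_mono1) simp
  finally show ?thesis .
qed

lemma kron_mat_dim [simp]:
  "dim_row (kron_mat A B) = dim_row A * dim_row B" "dim_col (kron_mat A B) = dim_col A * dim_col B"
  unfolding kron_mat_def by auto

lemma index_kron_mat:
  "i < dim_row A * dim_row B \<Longrightarrow> j < dim_col A * dim_col B \<Longrightarrow>
   kron_mat A B $$ (i,j) = A $$ (i div dim_row B, j div dim_col B) * B $$ (i mod dim_row B, j mod dim_col B)"
  unfolding kron_mat_def by auto

lemma kron_mat_carrier:
  "A \<in> carrier_mat a a' \<Longrightarrow> B \<in> carrier_mat b b' \<Longrightarrow> kron_mat A B \<in> carrier_mat (a*b) (a'*b')"
  by (intro carrier_matI) auto

lemma kron_mat_mult: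
  assumes A: "A \<in> carrier_mat a a'" and B: "B \<in> carrier_mat b b'"
    and C: "C \<in> carrier_mat a' a''" and D: "D \<in> carrier_mat b' b''"
  shows "kron_mat A B * kron_mat C D = kron_mat (A * C) (B * D :: complex mat)"
proof (rule eq_matI)
  fix i j assume "i < dim_row (kron_mat (A * C) (B * D))" "j < dim_col (kron_mat (A * C) (B * D))"
  hence i: "i < a * b" and j: "j < a'' * b''" using A B C D by auto
  have "(kron_mat A B * kron_mat C D) $$ (i,j) =
      (\<Sum>p<a'. \<Sum>q<b'. kron_mat A B $$ (i,p*b'+q) * kron_mat C D $$ (p*b'+q,j))"
    by (simp add: index_mult_mat_carrier[OF kron_mat_carrier[OF A B] kron_mat_carrier[OF C D] i j]
        sum_lessThan_mult_nat)
  also have "\<dots> = (\<Sum>p<a'. \<Sum>q<b'. (A $$ (i div b, p) * C $$ (p, j div b'')) *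
      (B $$ (i mod b, q) * D $$ (q, j mod b'')))"
    using A B C D i j by (intro sum.cong refl) (simp add: index_kron_mat mult_add_less_mult)
  also have "\<dots> = kron_mat (A * C) (B * D) $$ (i,j)"
    using A B C D i j div_mod_less_mult[OF i] div_mod_less_mult[OF j]
    by (simp del: index_mult_mat add: sum_product index_mult_mat(2,3) index_kron_mat
        index_mult_mat_carrier[of _ a a' _ a''] index_mult_mat_carrier[of _ b b' _ b''])
  finally show "(kron_mat A B * kron_mat C D) $$ (i,j) = kron_mat (A * C) (B * D) $$ (i,j)" .
qed (use A B C D in auto)

lemma kron_mat_adjoint:
  "mat_adjoint (kron_mat A B) = kron_mat (mat_adjoint A) (mat_adjoint (B :: complex mat))"
proof (rule eq_matI)
  fix i j assume "i < dim_row (kron_mat (mat_adjoint A) (mat_adjoint B))"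
    "j < dim_col (kron_mat (mat_adjoint A) (mat_adjoint B))"
  hence i: "i < dim_col A * dim_col B" and j: "j < dim_row A * dim_row B" by auto
  show "mat_adjoint (kron_mat A B) $$ (i,j) = kron_mat (mat_adjoint A) (mat_adjoint B) $$ (i,j)"
    using div_mod_less_mult[OF i] div_mod_less_mult[OF j] i j by (simp add: index_kron_mat)
qed auto

lemma kron_mat_real_diag_mat:
  "0 < b \<Longrightarrow> kron_mat (real_diag_mat a l1) (real_diag_mat b l2) =
     real_diag_mat (a*b) (\<lambda>x. l1 (x div b) * l2 (x mod b))"
proof (rule eq_matI)
  fix i j assume "0 < b" "i < dim_row (real_diag_mat (a*b) (\<lambda>x. l1 (x div b) * l2 (x mod b)))"
    "j < dim_col (real_diag_mat (a*b) (\<lambda>x. l1 (x div b) * l2 (x mod b)))"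
  hence i: "i < a*b" and j: "j < a*b" by auto
  have "(i div b = j div b \<and> i mod b = j mod b) = (i = j)" by (metis div_mult_mod_eq)
  thus "kron_mat (real_diag_mat a l1) (real_diag_mat b l2) $$ (i,j) =
      real_diag_mat (a*b) (\<lambda>x. l1 (x div b) * l2 (x mod b)) $$ (i,j)"
    using div_mod_less_mult[OF i] div_mod_less_mult[OF j] i j
    by (auto simp: index_kron_mat real_diag_mat_def)
qed auto

lemma kron_mat_one: "0 < b \<Longrightarrow> kron_mat (1\<^sub>m a) (1\<^sub>m b) = (1\<^sub>m (a*b) :: complex mat)"
proof (rule eq_matI)
  fix i j assume "0 < b" "i < dim_row (1\<^sub>m (a*b) :: complex mat)" "j < dim_col (1\<^sub>m (a*b) :: complex mat)"
  hence i: "i < a*b" and j: "j < a*b" by auto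
  have "(i div b = j div b \<and> i mod b = j mod b) = (i = j)" by (metis div_mult_mod_eq)
  thus "kron_mat (1\<^sub>m a) (1\<^sub>m b) $$ (i,j) = (1\<^sub>m (a*b) :: complex mat) $$ (i,j)"
    using div_mod_less_mult[OF i] div_mod_less_mult[OF j] i j by (auto simp: index_kron_mat)
qed auto

lemma unitary_mat_kron:
  assumes U1: "unitary_mat a U1" and U2: "unitary_mat b U2" and b: "0 < b"
  shows "unitary_mat (a*b) (kron_mat U1 U2)"
proof -
  have U1c: "U1 \<in> carrier_mat a a" and U2c: "U2 \<in> carrier_mat b b"
    using U1 U2 by (auto dest: unitary_mat_carrier)
  have "kron_mat U1 U2 * mat_adjoint (kron_mat U1 U2) =
      kron_mat (U1 * mat_adjoint U1) (U2 * mat_adjoint U2)"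
    unfolding kron_mat_adjoint by (rule kron_mat_mult) (use U1c U2c in auto)
  thus ?thesis unfolding unitary_mat_def
    using kron_mat_carrier[OF U1c U2c] unitary_mat_mult_adjoint[OF U1] unitary_mat_mult_adjoint[OF U2]
      kron_mat_one[OF b] by simp
qed

lemma kron_mat_pos_eigen_decomp:
  assumes A: "pos_eigen_decomp a A U1 l1" and B: "pos_eigen_decomp b B U2 l2" and b: "0 < b"
  shows "pos_eigen_decomp (a*b) (kron_mat A B) (kron_mat U1 U2) (\<lambda>x. l1 (x div b) * l2 (x mod b))"
proof -
  have U1: "unitary_mat a U1" and U2: "unitary_mat b U2"
    using A B unfolding pos_eigen_decomp_def by auto
  have U1c: "U1 \<in> carrier_mat a a" and U2c: "U2 \<in> carrier_mat b b"
    using U1 U2 by (auto dest: unitary_mat_carrier)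
  have "kron_mat A B = kron_mat (U1 * real_diag_mat a l1) (U2 * real_diag_mat b l2) *
      kron_mat (mat_adjoint U1) (mat_adjoint U2)"
    using A B U1c U2c unfolding pos_eigen_decomp_def by (subst kron_mat_mult) auto
  also have "kron_mat (U1 * real_diag_mat a l1) (U2 * real_diag_mat b l2) =
      kron_mat U1 U2 * kron_mat (real_diag_mat a l1) (real_diag_mat b l2)"
    by (rule kron_mat_mult[symmetric]) (use U1c U2c in auto)
  also have "kron_mat (mat_adjoint U1) (mat_adjoint U2) = mat_adjoint (kron_mat U1 U2)"
    by (rule kron_mat_adjoint[symmetric])
  finally show ?thesis
    using A B unitary_mat_kron[OF U1 U2 b] div_mod_less_mult
    unfolding pos_eigen_decomp_def kron_mat_real_diag_mat[OF b] by (auto intro!: mult_pos_pos)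
qed

lemma mtrace_kron_mat:
  assumes A: "A \<in> carrier_mat a a" and B: "B \<in> carrier_mat b b"
  shows "mtrace (kron_mat A B) = mtrace A * mtrace B"
proof -
  have "mtrace (kron_mat A B) = (\<Sum>i<a. \<Sum>k<b. kron_mat A B $$ (i*b+k,i*b+k))"
    unfolding mtrace_def using A B by (simp add: sum_lessThan_mult_nat)
  also have "\<dots> = (\<Sum>i<a. \<Sum>k<b. A $$ (i,i) * B $$ (k,k))"
    using A B by (intro sum.cong refl) (simp add: index_kron_mat mult_add_less_mult)
  also have "\<dots> = mtrace A * mtrace B" unfolding mtrace_def using A B by (simp add: sum_product)
  finally show ?thesis .
qed

lemma ptrace_B_dim [simp]: "dim_row (ptrace_B dA dB R) = dA" "dim_col (ptrace_B dA dB R) = dA"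
  unfolding ptrace_B_def by auto

lemma ptrace_B_carrier: "ptrace_B dA dB R \<in> carrier_mat dA dA"
  by (intro carrier_matI) auto

lemma index_ptrace_B:
  "i < dA \<Longrightarrow> j < dA \<Longrightarrow> ptrace_B dA dB R $$ (i,j) = (\<Sum>k<dB. R $$ (i * dB + k, j * dB + k))"
  unfolding ptrace_B_def by auto

lemma mtrace_ptrace_B: "R \<in> carrier_mat (dA*dB) (dA*dB) \<Longrightarrow> mtrace (ptrace_B dA dB R) = mtrace R"
  unfolding mtrace_def using ptrace_B_carrier[of dA dB R] by (simp add: index_ptrace_B sum_lessThan_mult_nat)

lemma sum_lessThan_mult_mod_eq:
  fixes dA dB k :: nat
  assumes "k < dB"
  shows "(\<Sum>x<dA*dB. if x mod dB = k then h x else 0) = (\<Sum>i<dA. h (i*dB+k))"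
  using assms by (simp add: sum_lessThan_mult_nat if_distrib cong: if_cong)

text \<open>\<open>w k\<close> is \<open>v \<otimes> e_k\<close>.\<close>

lemma quadratic_form_ptrace_B:
  assumes R: "R \<in> carrier_mat (dA*dB) (dA*dB)" and v: "v \<in> carrier_vec dA"
  defines "w k \<equiv> vec (dA*dB) (\<lambda>x. if x mod dB = k then v $ (x div dB) else 0)"
  shows "conjugate v \<bullet> (ptrace_B dA dB R *\<^sub>v v) = (\<Sum>k<dB. conjugate (w k) \<bullet> (R *\<^sub>v w k))"
proof -
  have "conjugate (w k) \<bullet> (R *\<^sub>v w k) = (\<Sum>i<dA. \<Sum>j<dA. cnj (v$i) * R $$ (i*dB+k, j*dB+k) * v$j)"
    if k: "k < dB" for k
  proof -
    have "conjugate (w k) \<bullet> (R *\<^sub>v w k) = (\<Sum>x<dA*dB. \<Sum>y<dA*dB. cnj (w k $ x) * R$$(x,y) * w k $ y)"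
      by (rule quadratic_form_sum[OF _ R]) (simp add: w_def)
    also have "\<dots> = (\<Sum>x<dA*dB. if x mod dB = k then
        (\<Sum>y<dA*dB. if y mod dB = k then cnj (v $ (x div dB)) * R$$(x,y) * v $ (y div dB) else 0) else 0)"
      by (intro sum.cong refl) (auto simp: w_def intro!: sum.cong)
    finally have "conjugate (w k) \<bullet> (R *\<^sub>v w k) = \<dots>" .
    thus ?thesis using k by (simp add: sum_lessThan_mult_mod_eq)
  qed
  moreover have "conjugate v \<bullet> (ptrace_B dA dB R *\<^sub>v v) =
      (\<Sum>k<dB. \<Sum>i<dA. \<Sum>j<dA. cnj (v$i) * R $$ (i*dB+k, j*dB+k) * v$j)"
    unfolding quadratic_form_sum[OF v ptrace_B_carrier]
    by (simp add: index_ptrace_B sum_distrib_left sum_distrib_right,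
        subst (2) sum.swap, subst sum.swap) simp
  ultimately show ?thesis by simp
qed

lemma pos_def_ptrace_B:
  assumes R: "pos_def_mat (dA*dB) R" and dB: "0 < dB"
  shows "pos_def_mat dA (ptrace_B dA dB R)"
proof -
  have Rc: "R \<in> carrier_mat (dA*dB) (dA*dB)" and hR: "mat_adjoint R = R"
    using R unfolding pos_def_mat_def hermitian_mat_def by auto
  have "mat_adjoint (ptrace_B dA dB R) = ptrace_B dA dB R"
  proof (rule eq_matI)
    fix i j assume "i < dim_row (ptrace_B dA dB R)" "j < dim_col (ptrace_B dA dB R)"
    hence i: "i < dA" and j: "j < dA" using ptrace_B_carrier[of dA dB R] by auto
    have "cnj (R $$ (j * dB + k, i * dB + k)) = R $$ (i * dB + k, j * dB + k)" if "k < dB" for k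
      using arg_cong[OF hR, of "\<lambda>M. M $$ (i * dB + k, j * dB + k)"] Rc i j that
      by (simp add: mult_add_less_mult)
    thus "mat_adjoint (ptrace_B dA dB R) $$ (i,j) = ptrace_B dA dB R $$ (i,j)"
      using i j ptrace_B_carrier[of dA dB R] by (simp add: index_ptrace_B cnj_sum)
  qed (use ptrace_B_carrier in auto)
  moreover have "0 < Re (conjugate v \<bullet> (ptrace_B dA dB R *\<^sub>v v))"
    if v: "v \<in> carrier_vec dA" and v0: "v \<noteq> 0\<^sub>v dA" for v
  proof -
    define w where "w k = vec (dA*dB) (\<lambda>x. if x mod dB = k then v $ (x div dB) else 0)" for k
    obtain i where i: "i < dA" "v $ i \<noteq> 0" using nonzero_vec_obtain_index[OF v v0] .
    have "0 < Re (conjugate (w k) \<bullet> (R *\<^sub>v w k))" if k: "k < dB" for k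
    proof -
      have "w k $ (i*dB+k) \<noteq> 0" using i k by (simp add: w_def mult_add_less_mult)
      hence "w k \<noteq> 0\<^sub>v (dA*dB)" using i k by (auto simp: mult_add_less_mult)
      thus ?thesis using R unfolding pos_def_mat_def w_def by auto
    qed
    hence "0 < (\<Sum>k<dB. Re (conjugate (w k) \<bullet> (R *\<^sub>v w k)))" using dB by (intro sum_pos) auto
    thus ?thesis unfolding quadratic_form_ptrace_B[OF Rc v] w_def by (simp add: Re_sum)
  qed
  ultimately show ?thesis unfolding pos_def_mat_def hermitian_mat_def using ptrace_B_carrier by auto
qed

section \<open>Concavity of the logarithm\<close>

lemma weighted_sum_pos:
  fixes w x :: "'a \<Rightarrow> real"
  assumes "finite S" and "\<And>k. k \<in> S \<Longrightarrow> 0 \<le> w k" and "(\<Sum>k\<in>S. w k) = 1"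
    and "\<And>k. k \<in> S \<Longrightarrow> 0 < x k"
  shows "0 < (\<Sum>k\<in>S. w k * x k)"
proof -
  obtain k where "k \<in> S" "w k \<noteq> 0" using assms(3) by (metis sum.neutral zero_neq_one)
  thus ?thesis using assms by (intro sum_pos2[of _ k]) (auto simp: less_le)
qed

lemma sum_weighted_ln_le_ln_sum:
  fixes w x :: "'a \<Rightarrow> real"
  assumes S: "finite S" and w: "\<And>k. k \<in> S \<Longrightarrow> 0 \<le> w k" and sw: "(\<Sum>k\<in>S. w k) = 1"
    and x: "\<And>k. k \<in> S \<Longrightarrow> 0 < x k"
  shows "(\<Sum>k\<in>S. w k * ln (x k)) \<le> ln (\<Sum>k\<in>S. w k * x k)"
proof -
  define M where "M = (\<Sum>k\<in>S. w k * x k)"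
  have M: "0 < M" unfolding M_def by (rule weighted_sum_pos[OF assms])
  have "(\<Sum>k\<in>S. w k * ln (x k / M)) = (\<Sum>k\<in>S. w k * ln (x k) - w k * ln M)"
  proof (rule sum.cong[OF refl])
    fix k assume "k \<in> S"
    show "w k * ln (x k / M) = w k * ln (x k) - w k * ln M"
      using x[OF \<open>k \<in> S\<close>] M by (simp add: ln_div right_diff_distrib)
  qed
  hence "(\<Sum>k\<in>S. w k * ln (x k)) - ln M = (\<Sum>k\<in>S. w k * ln (x k / M))"
    by (simp add: sum_subtractf sum_distrib_right[symmetric] sw)
  also have "\<dots> \<le> (\<Sum>k\<in>S. w k * (x k / M - 1))"
    using w x M by (intro sum_mono mult_left_mono ln_le_minus_one) auto
  also have "\<dots> = 0"
    using M by (simp add: right_diff_distrib sum_subtractf sw sum_divide_distrib[symmetric] M_def)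
  finally show ?thesis unfolding M_def by simp
qed

lemma sum_ln_le_of_sum_eq_1:
  fixes m :: "nat \<Rightarrow> real"
  assumes d: "0 < d" and m: "\<And>j. j < d \<Longrightarrow> 0 < m j" and sm: "(\<Sum>j<d. m j) = 1"
  shows "(\<Sum>j<d. ln (m j)) \<le> - d * ln d"
proof -
  have "(\<Sum>j<d. 1 / d * ln (m j)) \<le> ln (\<Sum>j<d. 1 / d * m j)"
    by (rule sum_weighted_ln_le_ln_sum) (use d m in auto)
  hence "(\<Sum>j<d. ln (m j)) / d \<le> - ln d"
    using sm d by (simp add: sum_distrib_left[symmetric] sum_divide_distrib[symmetric] ln_div)
  thus ?thesis using d by (simp add: divide_le_eq mult.commute)
qed

lemma ln_doubly_stochastic_sum_ge:
  fixes l m :: "nat \<Rightarrow> real" and P :: "nat \<Rightarrow> nat \<Rightarrow> real" and \<alpha> :: real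
  assumes d: "0 < d" and l: "\<And>i. i < d \<Longrightarrow> 0 < l i" and m: "\<And>j. j < d \<Longrightarrow> 0 < m j"
    and P: "\<And>i j. i < d \<Longrightarrow> j < d \<Longrightarrow> 0 \<le> P i j"
    and rows: "\<And>i. i < d \<Longrightarrow> (\<Sum>j<d. P i j) = 1"
    and cols: "\<And>j. j < d \<Longrightarrow> (\<Sum>i<d. P i j) = 1"
    and sm: "(\<Sum>j<d. m j) = 1" and \<alpha>: "1 < \<alpha>"
  shows "\<alpha> * ln d + \<alpha> / d * ln (\<Prod>i<d. l i) \<le>
    ln (\<Sum>i<d. \<Sum>j<d. l i powr \<alpha> * m j powr (1 - \<alpha>) * P i j)"
proof -
  let ?S = "{..<d} \<times> {..<d}"
  define w where "w = (\<lambda>(i,j). P i j / d)"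
  define x where "x = (\<lambda>(i,j). l i powr \<alpha> * m j powr (1 - \<alpha>))"
  have sw: "(\<Sum>k\<in>?S. w k) = 1"
    using rows d by (simp add: w_def sum.cartesian_product[symmetric] sum_divide_distrib[symmetric])
  have w_nonneg: "0 \<le> w k" if "k \<in> ?S" for k using that P by (auto simp: w_def)
  have x_pos: "0 < x k" if "k \<in> ?S" for k
    using that l[of "fst k"] m[of "snd k"] by (auto simp: x_def split: prod.splits)
  have "(\<Sum>k\<in>?S. w k * ln (x k)) =
      (\<Sum>(i,j)\<in>?S. \<alpha> / d * (ln (l i) * P i j) + (1 - \<alpha>) / d * (ln (m j) * P i j))"
  proof (rule sum.cong[OF refl])
    fix k assume "k \<in> ?S"
    then obtain i j where k: "k = (i,j)" "i < d" "j < d" by auto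
    have e: "ln (x (i,j)) = \<alpha> * ln (l i) + (1 - \<alpha>) * ln (m j)"
      using l[OF k(2)] m[OF k(3)] unfolding x_def by (simp add: ln_mult ln_powr)
    show "w k * ln (x k) = (case k of (i,j) \<Rightarrow> \<alpha> / d * (ln (l i) * P i j) + (1 - \<alpha>) / d * (ln (m j) * P i j))"
      unfolding k(1) w_def e by (simp add: divide_inverse algebra_simps)
  qed
  also have "\<dots> = (\<Sum>i<d. \<Sum>j<d. \<alpha> / d * (ln (l i) * P i j) + (1 - \<alpha>) / d * (ln (m j) * P i j))"
    by (simp only: sum.cartesian_product)
  also have "\<dots> = \<alpha> / d * (\<Sum>i<d. ln (l i) * (\<Sum>j<d. P i j)) +
      (1 - \<alpha>) / d * (\<Sum>j<d. ln (m j) * (\<Sum>i<d. P i j))"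
    by (simp add: sum.distrib sum_distrib_left, subst (2) sum.swap) simp
  also have "\<dots> = \<alpha> / d * ln (\<Prod>i<d. l i) + (1 - \<alpha>) / d * (\<Sum>j<d. ln (m j))"
    using rows cols ln_prod[of "{..<d}" l] l by (simp add: less_imp_neq[symmetric])
  finally have split: "(\<Sum>k\<in>?S. w k * ln (x k)) =
      \<alpha> / d * ln (\<Prod>i<d. l i) + (1 - \<alpha>) / d * (\<Sum>j<d. ln (m j))" .
  have "(1 - \<alpha>) / d * (- d * ln d) \<le> (1 - \<alpha>) / d * (\<Sum>j<d. ln (m j))"
    using \<alpha> d sum_ln_le_of_sum_eq_1[OF d m sm]
    by (intro mult_left_mono_neg) (auto simp: divide_nonpos_pos)
  moreover have "(1 - \<alpha>) / d * (- d * ln d) = (\<alpha> - 1) * ln d" using d by simp (simp add: algebra_simps)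
  ultimately have lower: "\<alpha> / d * ln (\<Prod>i<d. l i) + (\<alpha> - 1) * ln d \<le> (\<Sum>k\<in>?S. w k * ln (x k))"
    unfolding split by simp
  have T: "(\<Sum>k\<in>?S. w k * x k) = (\<Sum>i<d. \<Sum>j<d. l i powr \<alpha> * m j powr (1 - \<alpha>) * P i j) / d"
    unfolding sum_divide_distrib sum.cartesian_product w_def x_def
    by (intro sum.cong refl) (auto split: prod.splits)
  have "0 < (\<Sum>k\<in>?S. w k * x k)" by (rule weighted_sum_pos) (use w_nonneg sw x_pos in auto)
  hence "ln (\<Sum>k\<in>?S. w k * x k) = ln (\<Sum>i<d. \<Sum>j<d. l i powr \<alpha> * m j powr (1 - \<alpha>) * P i j) - ln d"
    using d unfolding T by (simp add: ln_div zero_less_divide_iff)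
  moreover have "(\<Sum>k\<in>?S. w k * ln (x k)) \<le> ln (\<Sum>k\<in>?S. w k * x k)"
    by (rule sum_weighted_ln_le_ln_sum) (use w_nonneg sw x_pos in auto)
  ultimately show ?thesis using lower by (simp add: algebra_simps)
qed

section \<open>The lower bound\<close>

lemma mtrace_eq_1_imp_dim_pos: "mtrace A = 1 \<Longrightarrow> 0 < dim_row A"
  unfolding mtrace_def by (cases "dim_row A") auto

lemma ln_mtrace_powr_ge:
  assumes \<rho>: "pos_def_mat d \<rho>" and \<tau>: "dim_row \<tau> = d" "pos_eigen_decomp d \<tau> V0 m0"
    and tr\<tau>: "mtrace \<tau> = 1" and \<alpha>: "1 < \<alpha>"
  shows "\<alpha> * ln d + \<alpha> / d * ln (Re (det \<rho>)) \<le>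
    ln (Re (mtrace (mat_powr \<rho> \<alpha> * mat_powr \<tau> (1 - \<alpha>))))"
proof -
  have d: "0 < d" using mtrace_eq_1_imp_dim_pos[OF tr\<tau>] \<tau>(1) by simp
  have "dim_row \<rho> = d" using \<rho> unfolding pos_def_mat_def by auto
  then obtain U l where U: "pos_eigen_decomp d \<rho> U l"
    and \<rho>\<alpha>: "mat_powr \<rho> \<alpha> = U * real_diag_mat d (\<lambda>i. l i powr \<alpha>) * mat_adjoint U"
    using mat_powr_eigen_decomp pos_def_mat_eigen_decomp[OF \<rho>] by blast
  obtain V m where V: "pos_eigen_decomp d \<tau> V m"
    and \<tau>\<alpha>: "mat_powr \<tau> (1 - \<alpha>) = V * real_diag_mat d (\<lambda>i. m i powr (1 - \<alpha>)) * mat_adjoint V"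
    using mat_powr_eigen_decomp[OF \<tau>] by blast
  have Uu: "unitary_mat d U" and Vu: "unitary_mat d V" and l: "\<forall>i<d. 0 < l i" and m: "\<forall>i<d. 0 < m i"
    using U V unfolding pos_eigen_decomp_def by auto
  have sm: "(\<Sum>j<d. m j) = 1"
    using tr\<tau> V mtrace_eigen[OF Vu] unfolding pos_eigen_decomp_def by (metis of_real_eq_1_iff)
  have det: "Re (det \<rho>) = (\<Prod>i<d. l i)"
    using U det_eigen[OF Uu] unfolding pos_eigen_decomp_def by (simp del: of_real_prod)
  define C where "C = mat_adjoint U * V"
  have C: "unitary_mat d C" unfolding C_def by (rule unitary_mat_mult[OF unitary_mat_adjoint[OF Uu] Vu])
  have "Re (mtrace (mat_powr \<rho> \<alpha> * mat_powr \<tau> (1 - \<alpha>))) =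
      (\<Sum>i<d. \<Sum>j<d. l i powr \<alpha> * m j powr (1 - \<alpha>) * (cmod (C $$ (i,j)))^2)"
    unfolding \<rho>\<alpha> \<tau>\<alpha> C_def
    using mtrace_eigen_product[OF unitary_mat_carrier[OF Uu] unitary_mat_carrier[OF Vu]] by simp
  thus ?thesis unfolding det
    using ln_doubly_stochastic_sum_ge[OF d _ _ _ unitary_mat_row_norms[OF C]
        unitary_mat_col_norms[OF C] sm \<alpha>] l m by simp
qed

lemma renyi_div_ge:
  assumes b: "1 < b" and \<alpha>: "1 < \<alpha>" and \<rho>: "pos_def_mat d \<rho>"
    and \<tau>: "dim_row \<tau> = d" "pos_eigen_decomp d \<tau> V m" and tr\<tau>: "mtrace \<tau> = 1"
  shows "\<alpha> / (\<alpha> - 1) * (log b d + 1 / d * log b (Re (det \<rho>))) \<le> renyi_div b \<alpha> \<rho> \<tau>"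
proof -
  have lb: "0 < ln b" using b by simp
  have "\<alpha> / (\<alpha> - 1) * (log b d + 1 / d * log b (Re (det \<rho>))) =
      (\<alpha> * ln d + \<alpha> / d * ln (Re (det \<rho>))) / ((\<alpha> - 1) * ln b)"
    using lb \<alpha> by (simp add: log_def field_simps)
  also have "\<dots> \<le> ln (Re (mtrace (mat_powr \<rho> \<alpha> * mat_powr \<tau> (1 - \<alpha>)))) / ((\<alpha> - 1) * ln b)"
    using ln_mtrace_powr_ge[OF \<rho> \<tau> tr\<tau> \<alpha>] lb \<alpha> by (intro divide_right_mono) auto
  also have "\<dots> = renyi_div b \<alpha> \<rho> \<tau>"
    using lb \<alpha> by (simp add: renyi_div_def log_def field_simps)
  finally show ?thesis .
qed

lemma maximally_mixed_state:
  assumes "0 < n"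
  shows "pos_def_mat n (real_diag_mat n (\<lambda>_. 1 / n)) \<and> density_mat n (real_diag_mat n (\<lambda>_. 1 / n))"
proof -
  have "pos_def_mat n (real_diag_mat n (\<lambda>_. 1 / n))"
    using assms by (intro pos_def_real_diag_mat) auto
  moreover have "mtrace (real_diag_mat n (\<lambda>_. 1 / n)) = 1"
    using assms by (simp add: mtrace_def real_diag_mat_def)
  ultimately show ?thesis unfolding density_mat_def using pos_def_imp_pos_semidef_mat by blast
qed

theorem mainTheorem6:
  fixes b \<alpha> :: real and dA dB :: nat and \<rho> :: "complex mat"
  assumes "1 < b"
    and "pos_def_mat (dA * dB) \<rho>" and "density_mat (dA * dB) \<rho>"
    and "1 < \<alpha>"
  shows "renyi_MI b \<alpha> dA dB \<rho> \<ge>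
    \<alpha> / (\<alpha> - 1) * (log b (real (dA * dB)) + 1 / real (dA * dB) * log b (Re (det \<rho>)))"
  unfolding renyi_MI_def
proof (rule cINF_greatest)
  have \<rho>c: "\<rho> \<in> carrier_mat (dA * dB) (dA * dB)" and tr\<rho>: "mtrace \<rho> = 1"
    using assms(2,3) unfolding pos_def_mat_def density_mat_def by auto
  then have dB: "0 < dB" using mtrace_eq_1_imp_dim_pos[OF tr\<rho>] by auto
  then show "{\<sigma>. pos_def_mat dB \<sigma> \<and> density_mat dB \<sigma>} \<noteq> {}"
    using maximally_mixed_state by blast
  fix \<sigma> assume "\<sigma> \<in> {\<sigma>. pos_def_mat dB \<sigma> \<and> density_mat dB \<sigma>}"
  hence \<sigma>: "pos_def_mat dB \<sigma>" and tr\<sigma>: "mtrace \<sigma> = 1" unfolding density_mat_def by auto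
  obtain U1 l1 U2 l2 where "pos_eigen_decomp dA (ptrace_B dA dB \<rho>) U1 l1" "pos_eigen_decomp dB \<sigma> U2 l2"
    using pos_def_mat_eigen_decomp pos_def_ptrace_B[OF assms(2) dB] \<sigma> by metis
  from kron_mat_pos_eigen_decomp[OF this dB]
  have decomp: "pos_eigen_decomp (dA * dB) (kron_mat (ptrace_B dA dB \<rho>) \<sigma>)
      (kron_mat U1 U2) (\<lambda>x. l1 (x div dB) * l2 (x mod dB))" .
  have \<sigma>c: "\<sigma> \<in> carrier_mat dB dB" using \<sigma> unfolding pos_def_mat_def by simp
  hence dim: "dim_row (kron_mat (ptrace_B dA dB \<rho>) \<sigma>) = dA * dB" by simp
  have tr: "mtrace (kron_mat (ptrace_B dA dB \<rho>) \<sigma>) = 1"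
    using mtrace_kron_mat[OF ptrace_B_carrier \<sigma>c] mtrace_ptrace_B[OF \<rho>c] tr\<rho> tr\<sigma> by simp
  show "\<alpha> / (\<alpha> - 1) * (log b (real (dA * dB)) + 1 / real (dA * dB) * log b (Re (det \<rho>)))
      \<le> renyi_div b \<alpha> \<rho> (kron_mat (ptrace_B dA dB \<rho>) \<sigma>)"
    by (rule renyi_div_ge[OF assms(1,4,2) dim decomp tr])
qed

end
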